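(* Let $P=(p_1,\dots,p_n)$ be a configuration of length $n$. If there exist $i,j\in\{1,\dots,n\}$ such that $p_j=p_i+i$, then $P$ is not unique.
   Context: For a real sequence $A=(a_1,\dots,a_n)$, a configuration is a sequence $P=(p_1,\dots,p_n)$ with $p_\ell\in\{1,\dots,n-\ell+1\}$ for each $\ell$; $P$ is an output configuration for $A$ if for every $\ell=1,\dots,n$ the sum $a_{p_\ell}+\dots+a_{p_\ell+\ell-1}$ is maximum among all sums of $\ell$ consecutive entries of $A$. A configuration $P$ is unique if there exists $A\in\mathbb{R}^n$ whose only output configuration is $P$ (equivalently, for every $\ell$ the block of length $\ell$ starting at $p_\ell$ has sum strictly larger than every other block of length $\ell$). *)

theory Defs
  imports Complex_Main
begin

text \<open>Sequences A = (a_1,...,a_n) are modelled as functions nat => real,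
  only the values at 1..n being relevant.\<close>

definition block_sum :: "(nat \<Rightarrow> real) \<Rightarrow> nat \<Rightarrow> nat \<Rightarrow> real" where
  "block_sum a s l = (\<Sum>k = s..<s + l. a k)"

definition is_configuration :: "nat \<Rightarrow> (nat \<Rightarrow> nat) \<Rightarrow> bool" where
  "is_configuration n p \<longleftrightarrow> (\<forall>l \<in> {1..n}. p l \<in> {1..n - l + 1})"

definition unique_config :: "nat \<Rightarrow> (nat \<Rightarrow> nat) \<Rightarrow> bool" where
  "unique_config n p \<longleftrightarrow>
     (\<exists>a :: nat \<Rightarrow> real. \<forall>l \<in> {1..n}. \<forall>q \<in> {1..n - l + 1}.
        q \<noteq> p l \<longrightarrow> block_sum a q l < block_sum a (p l) l)"

end

theory Submission
  imports Defs
begin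

text \<open>If \<open>p\<^sub>j = p\<^sub>i + i\<close>, the optimal blocks of lengths \<open>i\<close> and \<open>j\<close> are adjacent, so
  their union is a block of length \<open>i + j\<close> whose sum is that of the two optimal blocks.
  The optimal block of length \<open>i + j\<close>, starting at \<open>m\<close>, splits into a block of length
  \<open>j\<close> at \<open>m\<close> followed by one of length \<open>i\<close> at \<open>m + j\<close>; since \<open>p\<^sub>j > p\<^sub>i\<close>, at most one
  of them can be optimal, so its sum is strictly smaller.  Hence neither block of length
  \<open>i + j\<close> can strictly dominate the other.\<close>

definition strictly_optimal_blocks :: "nat \<Rightarrow> (nat \<Rightarrow> real) \<Rightarrow> (nat \<Rightarrow> nat) \<Rightarrow> bool" where
  "strictly_optimal_blocks n a p \<longleftrightarrow>
     (\<forall>l \<in> {1..n}. \<forall>q \<in> {1..n - l + 1}. q \<noteq> p l \<longrightarrow> block_sum a q l < block_sum a (p l) l)"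

lemma unique_config_iff_strictly_optimal_blocks:
  "unique_config n p \<longleftrightarrow> (\<exists>a. strictly_optimal_blocks n a p)"
  unfolding unique_config_def strictly_optimal_blocks_def ..

lemma block_sum_add_length:
  "block_sum a s (x + y) = block_sum a s x + block_sum a (s + x) y"
  unfolding block_sum_def by (metis add.assoc le_add1 sum.atLeastLessThan_concat)

lemma strictly_optimal_blocks_le:
  assumes "strictly_optimal_blocks n a p" "l \<in> {1..n}" "q \<in> {1..n - l + 1}"
  shows "block_sum a q l \<le> block_sum a (p l) l"
  using assms unfolding strictly_optimal_blocks_def
  by (cases "q = p l") (auto intro: less_imp_le)

lemma strictly_optimal_blocks_split_lt:
  assumes opt: "strictly_optimal_blocks n a p"
    and i: "i \<in> {1..n}" and j: "j \<in> {1..n}" and ij: "i + j \<le> n"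
    and m: "m \<in> {1..n - (i + j) + 1}" and not_both: "m \<noteq> p j \<or> m + j \<noteq> p i"
  shows "block_sum a m (i + j) < block_sum a (p j) j + block_sum a (p i) i"
proof -
  have mj: "m \<in> {1..n - j + 1}" and mji: "m + j \<in> {1..n - i + 1}"
    using m i j ij by auto
  have "block_sum a m j \<le> block_sum a (p j) j"
    and "block_sum a (m + j) i \<le> block_sum a (p i) i"
    using strictly_optimal_blocks_le[OF opt] i j mj mji by auto
  moreover have "block_sum a m j < block_sum a (p j) j \<or> block_sum a (m + j) i < block_sum a (p i) i"
    using opt not_both i j mj mji unfolding strictly_optimal_blocks_def by blast
  moreover have "block_sum a m (i + j) = block_sum a m j + block_sum a (m + j) i"
    using block_sum_add_length[of a m j i] by (simp add: add.commute)
  ultimately show ?thesis by linarith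
qed

theorem proposition1:
  fixes n i j :: nat and p :: "nat \<Rightarrow> nat"
  assumes "is_configuration n p"
    and "i \<in> {1..n}" and "j \<in> {1..n}" and "p j = p i + i"
  shows "\<not> unique_config n p"
proof
  assume "unique_config n p"
  then obtain a where opt: "strictly_optimal_blocks n a p"
    unfolding unique_config_iff_strictly_optimal_blocks ..
  have pi: "p i \<in> {1..n - i + 1}" and pj: "p j \<in> {1..n - j + 1}"
    using assms(1-3) unfolding is_configuration_def by auto
  have ij: "i + j \<in> {1..n}" and pi_ij: "p i \<in> {1..n - (i + j) + 1}"
    using pi pj assms(2-4) by auto
  then have m: "p (i + j) \<in> {1..n - (i + j) + 1}"
    using assms(1) unfolding is_configuration_def by blast
  have "block_sum a (p (i + j)) (i + j) < block_sum a (p j) j + block_sum a (p i) i"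
    using strictly_optimal_blocks_split_lt[OF opt assms(2,3) _ m] ij assms(2,4) by auto
  also have "\<dots> = block_sum a (p i) (i + j)"
    using block_sum_add_length[of a "p i" i j] assms(4) by simp
  also have "\<dots> \<le> block_sum a (p (i + j)) (i + j)"
    using strictly_optimal_blocks_le[OF opt ij pi_ij] .
  finally show False by simp
qed

end
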